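(* There is no morphism $\pi:\mathbb{P}^1_{\mathbb{C}}\to\mathbb{P}^1_{\mathbb{C}}$ of degree $6$ for which there exist three distinct points $p,q,r\in\mathbb{P}^1$ such that $\pi$ has ramification index $(3,3)$ at $p$, ramification index $(2,2,2)$ at $q$, and ramification index $(3,2,1)$ at $r$.
   Context: A morphism $\pi:\mathbb{P}^1\to\mathbb{P}^1$ is said to have ramification index $(n_1,\dots,n_k)$ at a point $x_0$ if $\pi^{-1}(x_0)$ consists of exactly $k$ points at which $\pi$ has local multiplicities $n_1,\dots,n_k$ (so $n_1+\dots+n_k=\deg\pi$). *)

theory Defs
  imports "HOL-Computational_Algebra.Polynomial" "HOL-Library.Multiset" Complex_Main
begin

text \<open>The projective line P^1(C) is modelled as complex option: Some z is the affine
point z, None is the point at infinity.  A morphism P^1 -> P^1 is given (as always)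
in homogeneous coordinates by a pair of coprime polynomials (f, g), namely
[X:Y] |-> [Y^d f(X/Y) : Y^d g(X/Y)] with d = max (deg f) (deg g) its degree;
in the affine chart it is z |-> f(z)/g(z).\<close>

type_synonym P1 = "complex option"

definition mdeg :: "complex poly \<Rightarrow> complex poly \<Rightarrow> nat" where
  "mdeg f g = max (degree f) (degree g)"

definition is_morphism :: "complex poly \<Rightarrow> complex poly \<Rightarrow> bool" where
  "is_morphism f g \<longleftrightarrow> coprime f g \<and> (f \<noteq> 0 \<or> g \<noteq> 0)"

text \<open>The fibre over y = [a:b] is the zero locus of the degree-d binary form
b F - a G.  Dehomogenized: over Some a it is f - a g, over None it is g.\<close>

fun fibre_poly :: "complex poly \<Rightarrow> complex poly \<Rightarrow> P1 \<Rightarrow> complex poly" where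
  "fibre_poly f g (Some a) = f - smult a g"
| "fibre_poly f g None = g"

text \<open>Local multiplicity of the morphism (f,g) at x in the fibre over y: the
multiplicity of x as a root of the binary form b F - a G (at infinity this is
d minus the degree of the dehomogenized polynomial).\<close>

fun local_mult :: "complex poly \<Rightarrow> complex poly \<Rightarrow> P1 \<Rightarrow> P1 \<Rightarrow> nat" where
  "local_mult f g y (Some z) = order z (fibre_poly f g y)"
| "local_mult f g y None = mdeg f g - degree (fibre_poly f g y)"

text \<open>The ramification profile over y: the multiset of local multiplicities at the
points of the preimage of y.  "pi has ramification index (n1,...,nk) at y" means
ram_profile f g y = {#n1,...,nk#}.\<close>

definition ram_profile :: "complex poly \<Rightarrow> complex poly \<Rightarrow> P1 \<Rightarrow> nat multiset" where
  "ram_profile f g y =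
     image_mset (local_mult f g y) (mset_set {x. local_mult f g y x > 0})"

end

(* The fibre polynomials over p, q and r lie in the pencil spanned by f and g, so they satisfy
   a linear relation.  By the ramification data this is a relation
   u A^3 + v B^2 + w l_c^3 l_d^2 l_e = 0 between forms of degree 6, where A is the product of the
   two linear forms of the fibre over p, B that of the three over q, and c, d, e are the points
   over r with multiplicities 3, 2, 1.  A Moebius change of coordinates sends d to infinity and
   c to 0, turning the last term into w X^3 (X - e) and A into a quadratic with A(0) \<noteq> 0.
   Then 3 A' H - A H' for H = u A^3 + v B^2 is both v B (3 A' B - 2 A B') and -w X^2 L for an
   explicit cubic L.  As B is prime to X, L is a multiple of B, so 3 A' L - 2 A L' is a
   multiple of X^2; but its coefficient of X is 30 e A(0) lead(A) \<noteq> 0. *)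

theory Submission
  imports Defs
    "HOL-Computational_Algebra.Polynomial_Factorial"
    "HOL-Computational_Algebra.Field_as_Ring"
    "HOL-Computational_Algebra.Fundamental_Theorem_Algebra"
begin

lemma cubic_square_wronskian:
  fixes A B :: "'a::idom poly" and u v :: 'a
  defines "H \<equiv> smult u (A ^ 3) + smult v (B ^ 2)"
  shows "smult v (B * (smult 3 (pderiv A * B) - smult 2 (A * pderiv B)))
           = smult 3 (pderiv A * H) - A * pderiv H"
proof -
  have smult_eq: "smult c p = [:c:] * p" for c and p :: "'a poly"
    by simp
  show ?thesis
    unfolding H_def power3_eq_cube power2_eq_square pderiv_add pderiv_smult pderiv_mult
      smult_eq pderiv_singleton numeral_poly[symmetric]
    by algebra
qed

lemma degree_cubic_square_relation:
  fixes A B H :: "'a::idom poly"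
  assumes "smult u (A ^ 3) + smult v (B ^ 2) = H" "u \<noteq> 0" "v \<noteq> 0" "degree H < 3 * degree A"
  shows "2 * degree B = 3 * degree A"
proof -
  have "A \<noteq> 0"
    using assms(4) by auto
  then have "degree (H + - smult u (A ^ 3)) = 3 * degree A"
    using assms(2,4) by (subst degree_add_eq_right) (simp_all add: degree_power_eq)
  moreover have "smult v (B ^ 2) = H + - smult u (A ^ 3)"
    using assms(1) by (simp add: algebra_simps)
  ultimately have "degree (smult v (B ^ 2)) = 3 * degree A"
    by simp
  then have "degree (B ^ 2) = 3 * degree A"
    using assms(3) by simp
  moreover from this have "B \<noteq> 0"
    using assms(4) by (cases "B = 0") simp_all
  ultimately show ?thesis
    by (simp add: degree_power_eq)
qed

lemma dvd_of_dvd_X_power_mult: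
  fixes B L :: "'a::{field, field_gcd} poly"
  assumes "B dvd [:0, 1:] ^ n * L" "poly B 0 \<noteq> 0"
  shows "B dvd L"
proof -
  have "\<not> [:0, 1:] dvd B"
    using assms(2) by (simp add: dvd_iff_poly_eq_0)
  then have "coprime [:0, 1:] B"
    by (simp add: prime_elem_imp_coprime prime_elem_linear_field_poly)
  then have "coprime B ([:0, 1:] ^ n)"
    by (simp add: coprime_commute)
  with assms(1) show ?thesis
    by (simp only: coprime_dvd_mult_right_iff)
qed

lemma dvd_degree_eq_imp_smult:
  fixes B L :: "'a::field poly"
  assumes "B dvd L" "L \<noteq> 0" "degree L = degree B"
  obtains \<mu> where "L = smult \<mu> B"
proof -
  obtain k where L: "L = B * k"
    using assms(1) ..
  with assms(2,3) have "degree k = 0"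
    by (auto simp: degree_mult_eq)
  then obtain \<mu> where "k = [:\<mu>:]"
    by (rule degree_eq_zeroE)
  with L show ?thesis
    using that by simp
qed

lemma no_cubic_square_relation:
  fixes A B :: "'a::{field_char_0, field_gcd} poly"
  assumes rel: "smult u (A ^ 3) + smult v (B ^ 2) + smult w [:0, 0, 0, -e, 1:] = 0"
    and A: "degree A = 2" "poly A 0 \<noteq> 0"
    and nz: "u \<noteq> 0" "v \<noteq> 0" "w \<noteq> 0" "e \<noteq> 0"
  shows False
proof -
  define a0 a1 a2 where "a0 = coeff A 0" and "a1 = coeff A 1" and "a2 = coeff A 2"
  have A_eq: "A = [:a0, a1, a2:]"
    by (rule poly_eqI) (auto simp: a0_def a1_def a2_def coeff_pCons coeff_eq_0 A numeral_2_eq_2 split: nat.split)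
  have a0: "a0 \<noteq> 0" and a2: "a2 \<noteq> 0"
    using A by (auto simp: A_eq split: if_splits)
  define H where "H = smult (- w) [:0, 0, 0, -e, 1:]"
  define Q where "Q = smult 3 (pderiv A * B) - smult 2 (A * pderiv B)"
  define L where "L = [:3 * e * a0, -4 * a0, -(a1 + 3 * e * a2), 2 * a2:]"
  have H: "smult u (A ^ 3) + smult v (B ^ 2) = H"
    using rel unfolding H_def by (simp only: add_eq_0_iff2 smult_minus_left)
  have "smult 3 (pderiv A * H) - A * pderiv H = smult (- w) ([:0, 1:] ^ 2 * L)"
    unfolding A_eq H_def L_def by (simp add: pderiv_pCons power2_eq_square algebra_simps)
  with H cubic_square_wronskian[of v B A u]
  have BQ: "smult v (B * Q) = smult (- w) ([:0, 1:] ^ 2 * L)"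
    unfolding Q_def by simp
  have "degree B = 3"
    using degree_cubic_square_relation[OF H] nz A by (simp add: H_def)
  have "poly B 0 \<noteq> 0"
  proof
    assume "poly B 0 = 0"
    with arg_cong[OF rel, of "\<lambda>p. poly p 0"] have "u * a0 ^ 3 = 0"
      by (simp add: A_eq)
    with nz a0 show False by simp
  qed
  moreover have "B dvd smult (- w) ([:0, 1:] ^ 2 * L)"
    unfolding BQ[symmetric] by (intro dvd_smult dvd_triv_left)
  then have "B dvd [:0, 1:] ^ 2 * L"
    using nz by (elim dvd_smult_cancel) simp
  ultimately have "B dvd L"
    by (rule dvd_of_dvd_X_power_mult[rotated])
  moreover have "L \<noteq> 0" "degree L = degree B"
    using a2 \<open>degree B = 3\<close> by (simp_all add: L_def)
  ultimately obtain \<mu> where L_B: "L = smult \<mu> B"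
    by (rule dvd_degree_eq_imp_smult)
  have "B \<noteq> 0"
    using \<open>poly B 0 \<noteq> 0\<close> by auto
  moreover have "B * smult v Q = B * smult (- w * \<mu>) ([:0, 1:] ^ 2)"
    using BQ unfolding L_B by (simp add: algebra_simps)
  ultimately have "smult v Q = smult (- w * \<mu>) ([:0, 1:] ^ 2)"
    by (rule mult_left_cancel[THEN iffD1])
  then have "coeff (smult v Q) 1 = coeff (smult (- w * \<mu>) ([:0, 1:] ^ 2)) 1"
    by (rule arg_cong)
  then have "coeff Q 1 = 0"
    using nz by (simp add: power2_eq_square)
  moreover have "smult \<mu> Q = smult 3 (pderiv A * L) - smult 2 (A * pderiv L)"
    unfolding Q_def L_B by (simp add: pderiv_smult smult_diff_right ac_simps)
  moreover have "coeff (smult 3 (pderiv A * L) - smult 2 (A * pderiv L)) 1 = 30 * e * a0 * a2"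
    unfolding A_eq L_def by (simp add: pderiv_pCons algebra_simps)
  ultimately show False
    using nz a0 a2 by (metis coeff_smult mult_eq_0_iff zero_neq_numeral)
qed

fun linear_form :: "P1 \<Rightarrow> complex poly" where
  "linear_form (Some a) = [:-a, 1:]"
| "linear_form None = 1"

lemma degree_linear_form_le: "degree (linear_form x) \<le> 1"
  by (cases x) simp_all

fun shift_P1 :: "complex \<Rightarrow> P1 \<Rightarrow> P1" where
  "shift_P1 t (Some a) = Some (a - t)"
| "shift_P1 t None = None"

lemma poly_linear_form_shift: "poly (linear_form x) (t + z) = poly (linear_form (shift_P1 t x)) z"
  by (cases x) simp_all

fun invert_P1 :: "complex \<Rightarrow> P1 \<Rightarrow> P1" where
  "invert_P1 t (Some a) = (if a = t then None else Some (1 / (a - t)))"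
| "invert_P1 t None = Some 0"

fun inversion_factor :: "complex \<Rightarrow> P1 \<Rightarrow> complex" where
  "inversion_factor t (Some a) = (if a = t then 1 else t - a)"
| "inversion_factor t None = 1"

lemma inj_invert_P1: "inj (invert_P1 t)"
proof (rule injI)
  show "x = y" if "invert_P1 t x = invert_P1 t y" for x y
    using that by (cases x; cases y) (auto split: if_splits)
qed

lemma invert_P1_eq_None_iff: "invert_P1 t x = None \<longleftrightarrow> x = Some t"
  by (cases x) auto

lemma inversion_factor_nonzero: "inversion_factor t x \<noteq> 0"
  by (cases x) auto

lemma poly_linear_form_inversion:
  assumes "z \<noteq> 0"
  shows "z * poly (linear_form x) (t + 1 / z)
           = inversion_factor t x * poly (linear_form (invert_P1 t x)) z"
proof (cases x)
  case (Some a)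
  show ?thesis
  proof (cases "a = t")
    case False
    then have "(t - a) * (1 / (a - t)) = -1"
      by (simp add: divide_simps)
    with Some False assms show ?thesis
      by (simp add: algebra_simps)
  qed (use Some assms in simp)
qed (use assms in simp)

lemma poly_inversion:
  fixes h :: "'a::field poly"
  assumes "degree h \<le> n"
  obtains h' where "\<And>z. z \<noteq> 0 \<Longrightarrow> z ^ n * poly h (t + 1 / z) = poly h' z"
proof
  define h0 where "h0 = pcompose h [:t, 1:]"
  have "degree h0 \<le> n"
    using assms by (simp add: h0_def degree_pcompose)
  fix z :: 'a
  assume "z \<noteq> 0"
  have "z ^ n = z ^ (n - degree h0) * z ^ degree h0"
    using \<open>degree h0 \<le> n\<close> by (simp flip: power_add)
  moreover have "poly h (t + 1 / z) = poly h0 (inverse z)"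
    by (simp add: h0_def poly_pcompose divide_inverse add.commute)
  ultimately have "z ^ n * poly h (t + 1 / z) = z ^ (n - degree h0) * (z ^ degree h0 * poly h0 (inverse z))"
    by simp
  also have "\<dots> = poly (monom 1 (n - degree h0) * reflect_poly h0) z"
    using \<open>z \<noteq> 0\<close> by (simp add: poly_monom poly_reflect_poly_nz)
  finally show "z ^ n * poly h (t + 1 / z) = poly (monom 1 (n - degree h0) * reflect_poly h0) z" .
qed

lemma poly_eq_0_if_vanishes_off_0:
  fixes p :: "'a::{idom, ring_char_0} poly"
  assumes "\<And>z. z \<noteq> 0 \<Longrightarrow> poly p z = 0"
  shows "p = 0"
proof -
  have "p * [:0, 1:] = 0"
    using assms by (intro poly_all_0_iff_0[THEN iffD1]) auto
  then show ?thesis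
    by simp
qed

lemma no_profile_relation_at_infinity:
  assumes rel: "smult u ((linear_form x1 * linear_form x2) ^ 3) + smult v (B ^ 2)
                  + smult w (linear_form c ^ 3 * linear_form e) = 0"
    and nz: "u \<noteq> 0" "v \<noteq> 0" "w \<noteq> 0"
    and distinct: "None \<notin> {x1, x2, c, e}" "c \<notin> {x1, x2, e}"
  shows False
proof -
  obtain t where c: "c = Some t"
    using distinct by (cases c) auto
  obtain e0 where e0: "shift_P1 t e = Some e0" "e0 \<noteq> 0"
    using distinct c by (cases e) auto
  define A where "A = linear_form (shift_P1 t x1) * linear_form (shift_P1 t x2)"
  obtain a1 a2 where "x1 = Some a1" "x2 = Some a2" "a1 \<noteq> t" "a2 \<noteq> t"
    using distinct c by (cases x1; cases x2) auto
  then have "degree A = 2" "poly A 0 \<noteq> 0"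
    by (simp_all add: A_def)
  have C: "[:0, 0, 0, -e0, 1:] = linear_form (shift_P1 t c) ^ 3 * linear_form (shift_P1 t e)"
    using c e0 by (simp add: eval_nat_numeral)
  have "poly (smult u (A ^ 3) + smult v (pcompose B [:t, 1:] ^ 2) + smult w [:0, 0, 0, -e0, 1:]) z
          = poly (smult u ((linear_form x1 * linear_form x2) ^ 3) + smult v (B ^ 2)
                  + smult w (linear_form c ^ 3 * linear_form e)) (t + z)" for z
    unfolding A_def C by (simp add: poly_linear_form_shift poly_pcompose)
  then have "smult u (A ^ 3) + smult v (pcompose B [:t, 1:] ^ 2) + smult w [:0, 0, 0, -e0, 1:] = 0"
    using rel by (intro poly_all_0_iff_0[THEN iffD1]) simp
  then show False
    by (rule no_cubic_square_relation) (use nz e0 \<open>degree A = 2\<close> \<open>poly A 0 \<noteq> 0\<close> in auto)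
qed

lemma no_profile_relation:
  assumes rel: "smult u ((linear_form x1 * linear_form x2) ^ 3) + smult v (B ^ 2)
                  + smult w (linear_form c ^ 3 * linear_form d ^ 2 * linear_form e) = 0"
    and nz: "u \<noteq> 0" "v \<noteq> 0" "w \<noteq> 0" and deg_B: "degree B \<le> 3"
    and distinct: "d \<notin> {x1, x2, c, e}" "c \<notin> {x1, x2, e}"
  shows False
proof (cases d)
  case None
  then show False
    using assms by (intro no_profile_relation_at_infinity[of u x1 x2 v B w c e]) auto
next
  case (Some t)
  let ?\<psi> = "invert_P1 t" and ?\<kappa> = "inversion_factor t"
  obtain B' where B': "\<And>z. z \<noteq> 0 \<Longrightarrow> z ^ 3 * poly B (t + 1 / z) = poly B' z"
    using poly_inversion[OF deg_B] by blast
  define R where "R = smult u ((linear_form x1 * linear_form x2) ^ 3) + smult v (B ^ 2)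
                  + smult w (linear_form c ^ 3 * linear_form d ^ 2 * linear_form e)"
  define R' where "R' =
     smult (u * (?\<kappa> x1 * ?\<kappa> x2) ^ 3) ((linear_form (?\<psi> x1) * linear_form (?\<psi> x2)) ^ 3)
     + smult v (B' ^ 2)
     + smult (w * ?\<kappa> c ^ 3 * ?\<kappa> d ^ 2 * ?\<kappa> e) (linear_form (?\<psi> c) ^ 3 * linear_form (?\<psi> e))"
  have "poly R' z = z ^ 6 * poly R (t + 1 / z)" if "z \<noteq> 0" for z
  proof -
    let ?L = "\<lambda>x. poly (linear_form x) (t + 1 / z)"
    have "z ^ 6 * poly R (t + 1 / z)
            = u * ((z * ?L x1) * (z * ?L x2)) ^ 3 + v * (z ^ 3 * poly B (t + 1 / z)) ^ 2
              + w * ((z * ?L c) ^ 3 * (z * ?L d) ^ 2 * (z * ?L e))"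
      by (simp add: R_def power_mult_distrib eval_nat_numeral algebra_simps)
    also have "\<dots> = poly R' z"
      using that Some by (simp add: R'_def B' poly_linear_form_inversion algebra_simps)
    finally show ?thesis ..
  qed
  then have "R' = 0"
    using rel by (intro poly_eq_0_if_vanishes_off_0) (simp add: R_def)
  then show False
    using distinct nz Some inj_invert_P1[of t] inversion_factor_nonzero[of t]
    by (intro no_profile_relation_at_infinity[OF \<open>R' = 0\<close>[unfolded R'_def]])
       (auto simp: inj_eq invert_P1_eq_None_iff eq_commute[of None])
qed

(* Infinity gets the coordinates (-1, 0) rather than (1, 0) so that
   fibre_poly_hom_coords holds without a sign. *)
fun hom_coords :: "P1 \<Rightarrow> complex \<times> complex" where
  "hom_coords (Some a) = (a, 1)"
| "hom_coords None = (-1, 0)"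

definition hom_det :: "P1 \<Rightarrow> P1 \<Rightarrow> complex" where
  "hom_det y y' = fst (hom_coords y) * snd (hom_coords y') - fst (hom_coords y') * snd (hom_coords y)"

lemma hom_det_nonzero: "y \<noteq> y' \<Longrightarrow> hom_det y y' \<noteq> 0"
  by (cases y; cases y') (auto simp: hom_det_def)

lemma fibre_poly_hom_coords:
  "fibre_poly f g y = smult (snd (hom_coords y)) f - smult (fst (hom_coords y)) g"
  by (cases y) simp_all

lemma fibre_poly_relation:
  "smult (hom_det q r) (fibre_poly f g p) + smult (hom_det r p) (fibre_poly f g q)
     + smult (hom_det p q) (fibre_poly f g r) = 0"
  by (rule poly_eqI) (simp add: fibre_poly_hom_coords hom_det_def algebra_simps)

lemma smult_hom_det_eq_fibre_poly_combination:
  "smult (hom_det y y') f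
     = smult (fst (hom_coords y)) (fibre_poly f g y') - smult (fst (hom_coords y')) (fibre_poly f g y)"
  "smult (hom_det y y') g
     = smult (snd (hom_coords y)) (fibre_poly f g y') - smult (snd (hom_coords y')) (fibre_poly f g y)"
  by (rule poly_eqI, simp add: fibre_poly_hom_coords hom_det_def algebra_simps)+

lemma fibres_disjoint:
  assumes "is_morphism f g" "local_mult f g y x > 0" "local_mult f g y' x > 0"
  shows "y = y'"
proof (rule ccontr)
  assume "y \<noteq> y'"
  then have det: "hom_det y y' \<noteq> 0"
    by (rule hom_det_nonzero)
  show False
  proof (cases x)
    case None
    then have "degree (fibre_poly f g y) < mdeg f g" "degree (fibre_poly f g y') < mdeg f g"
      using assms(2,3) by simp_all
    then have small: "degree (smult a (fibre_poly f g y)) < mdeg f g"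
      "degree (smult a (fibre_poly f g y')) < mdeg f g" for a
      using degree_smult_le le_less_trans by blast+
    have "degree (smult (hom_det y y') f) < mdeg f g" "degree (smult (hom_det y y') g) < mdeg f g"
      unfolding smult_hom_det_eq_fibre_poly_combination[where f=f and g=g] by (intro degree_diff_less small)+
    with det show False
      by (simp add: mdeg_def)
  next
    case (Some z)
    then have "poly (fibre_poly f g y) z = 0" "poly (fibre_poly f g y') z = 0"
      using assms(2,3) order_root by auto
    then have "poly (smult (hom_det y y') f) z = 0" "poly (smult (hom_det y y') g) z = 0"
      unfolding smult_hom_det_eq_fibre_poly_combination[where f=f and g=g] by simp_all
    then have "poly f z = 0" "poly g z = 0"
      using det by simp_all
    then have "[:-z, 1:] dvd f" "[:-z, 1:] dvd g"
      by (simp_all add: dvd_iff_poly_eq_0)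
    with assms(1) have "is_unit [:-z, 1:]"
      unfolding is_morphism_def using coprime_common_divisor by blast
    then show False
      by (simp add: is_unit_poly_iff)
  qed
qed

lemma fibre_poly_nonzero:
  assumes "is_morphism f g" "0 < mdeg f g"
  shows "fibre_poly f g y \<noteq> 0"
proof
  assume F0: "fibre_poly f g y = 0"
  have "coprime f g"
    using assms(1) by (simp add: is_morphism_def)
  show False
  proof (cases y)
    case None
    with F0 have "g = 0"
      by simp
    with \<open>coprime f g\<close> have "degree f = 0"
      by (auto simp: is_unit_poly_iff)
    with \<open>g = 0\<close> assms(2) show False
      by (simp add: mdeg_def)
  next
    case (Some a)
    with F0 have f: "f = smult a g"
      by simp
    with \<open>coprime f g\<close> have "is_unit g"
      by (metis coprime_common_divisor dvd_refl dvd_smult)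
    then have "degree g = 0"
      by (auto simp: is_unit_poly_iff)
    moreover have "degree f \<le> degree g"
      using f degree_smult_le by simp
    ultimately show False
      using assms(2) by (simp add: mdeg_def)
  qed
qed

lemma fibre_poly_factorization:
  assumes F0: "fibre_poly f g y \<noteq> 0"
  defines "S \<equiv> {x. 0 < local_mult f g y x}"
  shows "finite S"
    and "fibre_poly f g y
           = smult (lead_coeff (fibre_poly f g y)) (\<Prod>x\<in>S. linear_form x ^ local_mult f g y x)"
proof -
  let ?F = "fibre_poly f g y"
  let ?R = "{z. poly ?F z = 0}"
  have "x \<in> S - {None} \<longleftrightarrow> x \<in> Some ` ?R" for x
    using F0 order_root[of ?F] by (cases x) (auto simp: S_def)
  then have S_Some: "S - {None} = Some ` ?R"
    by blast
  moreover have "finite ?R"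
    using F0 by (rule poly_roots_finite)
  ultimately show fin: "finite S"
    by (metis finite_Diff_insert finite_imageI Diff_empty)
  have "(\<Prod>x\<in>S. linear_form x ^ local_mult f g y x)
          = (\<Prod>x\<in>S - {None}. linear_form x ^ local_mult f g y x)"
    by (rule prod.mono_neutral_right) (use fin in auto)
  also have "\<dots> = (\<Prod>z\<in>?R. [:-z, 1:] ^ order z ?F)"
    unfolding S_Some by (subst prod.reindex) auto
  finally show "?F = smult (lead_coeff ?F) (\<Prod>x\<in>S. linear_form x ^ local_mult f g y x)"
    using complex_poly_decompose[of ?F] by simp
qed

lemma image_mset_mset_set_eq_mset:
  assumes "finite S" "image_mset h (mset_set S) = mset ks"
  obtains xs where "distinct xs" "set xs = S" "map h xs = ks"
  using assms
proof (induction ks arbitrary: S thesis)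
  case Nil
  then show ?case
    by (metis distinct.simps(1) image_mset_is_empty_iff list.simps(8) list.set(1) mset.simps(1) mset_set_empty_iff)
next
  case (Cons k ks)
  then have "k \<in># image_mset h (mset_set S)"
    by simp
  then obtain x where x: "x \<in> S" "h x = k"
    using Cons.prems(2) by auto
  have "image_mset h (mset_set (S - {x})) = mset ks"
    using Cons.prems x by (simp add: mset_set_Diff image_mset_Diff)
  with Cons.IH[of "S - {x}"] Cons.prems(2) obtain xs where "distinct xs" "set xs = S - {x}" "map h xs = ks"
    by blast
  then show ?case
    using Cons.prems x by (intro Cons.prems(1)[of "x # xs"]) auto
qed

lemma fibre_poly_ram_profile:
  assumes "fibre_poly f g y \<noteq> 0" "ram_profile f g y = mset ks"
  obtains xs where "distinct xs" "map (local_mult f g y) xs = ks"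
    "fibre_poly f g y
       = smult (lead_coeff (fibre_poly f g y)) (\<Prod>x\<leftarrow>xs. linear_form x ^ local_mult f g y x)"
proof -
  note fin = fibre_poly_factorization(1)[OF assms(1)]
  obtain xs where "distinct xs" "set xs = {x. 0 < local_mult f g y x}" "map (local_mult f g y) xs = ks"
    using image_mset_mset_set_eq_mset[OF fin] assms(2) unfolding ram_profile_def by blast
  moreover from this have "(\<Prod>x\<in>{x. 0 < local_mult f g y x}. linear_form x ^ local_mult f g y x)
      = (\<Prod>x\<leftarrow>xs. linear_form x ^ local_mult f g y x)"
    by (metis prod.distinct_set_conv_list)
  ultimately show ?thesis
    using fibre_poly_factorization(2)[OF assms(1)] that by simp
qed

lemma ramification_relation:
  assumes mor: "is_morphism f g" and deg: "0 < mdeg f g" and pqr: "p \<noteq> q" "q \<noteq> r" "p \<noteq> r"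
    and profiles: "ram_profile f g p = {#3, 3#}" "ram_profile f g q = {#2, 2, 2#}"
      "ram_profile f g r = {#3, 2, 1#}"
  obtains u v w x1 x2 B c d e where
    "smult u ((linear_form x1 * linear_form x2) ^ 3) + smult v (B ^ 2)
       + smult w (linear_form c ^ 3 * linear_form d ^ 2 * linear_form e) = 0"
    "u \<noteq> 0" "v \<noteq> 0" "w \<noteq> 0" "degree B \<le> 3" "d \<notin> {x1, x2, c, e}" "c \<notin> {x1, x2, e}"
proof -
  have F0: "fibre_poly f g y \<noteq> 0" for y
    using fibre_poly_nonzero[OF mor deg] .
  obtain x1 x2 where
    Fp: "fibre_poly f g p = smult (lead_coeff (fibre_poly f g p)) ((linear_form x1 * linear_form x2) ^ 3)"
      "local_mult f g p x1 = 3" "local_mult f g p x2 = 3"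
    by (rule fibre_poly_ram_profile[OF F0, of p "[3, 3]"])
       (use profiles in \<open>auto simp: map_eq_Cons_conv power_mult_distrib\<close>)
  obtain y1 y2 y3 where
    Fq: "fibre_poly f g q
           = smult (lead_coeff (fibre_poly f g q)) ((linear_form y1 * linear_form y2 * linear_form y3) ^ 2)"
    by (rule fibre_poly_ram_profile[OF F0, of q "[2, 2, 2]"])
       (use profiles in \<open>auto simp: map_eq_Cons_conv power_mult_distrib mult.assoc\<close>)
  obtain c d e where
    Fr: "fibre_poly f g r
           = smult (lead_coeff (fibre_poly f g r)) (linear_form c ^ 3 * linear_form d ^ 2 * linear_form e)"
      "local_mult f g r c = 3" "local_mult f g r d = 2" "distinct [c, d, e]"
    by (rule fibre_poly_ram_profile[OF F0, of r "[3, 2, 1]"])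
       (use profiles in \<open>auto simp: map_eq_Cons_conv mult_ac\<close>)
  have "d \<notin> {x1, x2}" "c \<notin> {x1, x2}"
    using fibres_disjoint[OF mor, of p _ r] Fp(2,3) Fr(2,3) \<open>p \<noteq> r\<close> by fastforce+
  moreover have "degree (linear_form y1 * linear_form y2 * linear_form y3) \<le> 3"
    using degree_mult_le[of "linear_form y1 * linear_form y2" "linear_form y3"]
      degree_mult_le[of "linear_form y1" "linear_form y2"] degree_linear_form_le[of y1]
      degree_linear_form_le[of y2] degree_linear_form_le[of y3]
    by linarith
  moreover have "smult (hom_det q r * lead_coeff (fibre_poly f g p)) ((linear_form x1 * linear_form x2) ^ 3)
      + smult (hom_det r p * lead_coeff (fibre_poly f g q))
          ((linear_form y1 * linear_form y2 * linear_form y3) ^ 2)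
      + smult (hom_det p q * lead_coeff (fibre_poly f g r))
          (linear_form c ^ 3 * linear_form d ^ 2 * linear_form e) = 0"
    using fibre_poly_relation[of q r f g p]
    by (subst (asm) Fp(1), subst (asm) Fq, subst (asm) Fr(1)) simp
  ultimately show thesis
    using F0 pqr \<open>distinct [c, d, e]\<close> by (elim that) (auto simp: hom_det_nonzero)
qed

theorem mainTheorem3:
  shows "\<not> (\<exists>(f::complex poly) (g::complex poly) (p::P1) (q::P1) (r::P1).
            is_morphism f g \<and> mdeg f g = 6 \<and>
            p \<noteq> q \<and> q \<noteq> r \<and> p \<noteq> r \<and>
            ram_profile f g p = {#3, 3#} \<and>
            ram_profile f g q = {#2, 2, 2#} \<and>
            ram_profile f g r = {#3, 2, 1#})"
proof (intro notI, elim exE conjE)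
  fix f g p q r
  assume "is_morphism f g" "mdeg f g = 6" "p \<noteq> q" "q \<noteq> r" "p \<noteq> r"
    "ram_profile f g p = {#3, 3#}" "ram_profile f g q = {#2, 2, 2#}" "ram_profile f g r = {#3, 2, 1#}"
  then obtain u v w x1 x2 B c d e where
    "smult u ((linear_form x1 * linear_form x2) ^ 3) + smult v (B ^ 2)
       + smult w (linear_form c ^ 3 * linear_form d ^ 2 * linear_form e) = 0"
    "u \<noteq> 0" "v \<noteq> 0" "w \<noteq> 0" "degree B \<le> 3" "d \<notin> {x1, x2, c, e}" "c \<notin> {x1, x2, e}"
    by (elim ramification_relation) simp_all
  then show False
    by (rule no_profile_relation)
qed

end
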